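(* Let $G=(V,E)$ be an undirected graph (finite or infinite), $X$ a ``strong'' partitive set of $G$, and $M=M(S)$ a multiplex of $G$ generated by a simplex $S=(V_S,E_S)$. If $M\cap E(X)\neq\emptyset$, then $M\subseteq E(X)$.
   Context: A graph $G=(V,E)$ has vertex set $V$ and edge set $E\subseteq V^2$; it is undirected if $E$ is irreflexive and symmetric. For $X\subseteq V$, $E(X)=\{(a,b)\in E:a,b\in X\}$. A set $X\subseteq V$ is a partitive set of $G$ if for all $a,b\in X$ and $c\in V\setminus X$: $(a,c)\in E\Leftrightarrow(b,c)\in E$ and $(c,a)\in E\Leftrightarrow(c,b)\in E$; $I(G)$ is the class of partitive sets. A ``strong'' partitive set is an $X\in I(G)$ such that for every $Y\in I(G)$ with $X\cap Y\neq\emptyset$, $X\subseteq Y$ or $Y\subseteq X$. Implication classes: on $E$ define $(a,b)\Gamma(a',b')$ iff either $a=a'$ and $(b,b')\notin E$, or $b=b'$ and $(a,a')\notin E$; the classes of the transitive closure $\Gamma^*$ are the implication classes. For an implication class $A$, $A^{-1}=\{(b,a):(a,b)\in A\}$ and the color class is $\widehat A=A\cup A^{-1}$. A simplex of rank $r\ge1$ is a complete sub-graph $S=(V_S,E_S)$ of $G$ on $r+1$ vertices whose distinct undirected edges lie in distinct color classes. The multiplex generated by $S$ is $M(S)=\bigcup\{\widehat A:\widehat A\text{ a color class},\ \widehat A\cap E_S\neq\emptyset\}$. *)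

theory Defs
  imports Main
begin

definition is_graph :: "'a set \<Rightarrow> ('a \<times> 'a) set \<Rightarrow> bool" where
  "is_graph V E \<longleftrightarrow> E \<subseteq> V \<times> V"

definition undirected_graph :: "'a set \<Rightarrow> ('a \<times> 'a) set \<Rightarrow> bool" where
  "undirected_graph V E \<longleftrightarrow> is_graph V E \<and> irrefl E \<and> sym E"

definition edges_in :: "('a \<times> 'a) set \<Rightarrow> 'a set \<Rightarrow> ('a \<times> 'a) set" where
  "edges_in E X = {(a, b) \<in> E. a \<in> X \<and> b \<in> X}"

definition partitive :: "'a set \<Rightarrow> ('a \<times> 'a) set \<Rightarrow> 'a set \<Rightarrow> bool" where
  "partitive V E X \<longleftrightarrow> X \<subseteq> V \<and>
     (\<forall>a\<in>X. \<forall>b\<in>X. \<forall>c\<in>V - X.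
        ((a, c) \<in> E \<longleftrightarrow> (b, c) \<in> E) \<and> ((c, a) \<in> E \<longleftrightarrow> (c, b) \<in> E))"

definition strong_partitive :: "'a set \<Rightarrow> ('a \<times> 'a) set \<Rightarrow> 'a set \<Rightarrow> bool" where
  "strong_partitive V E X \<longleftrightarrow> partitive V E X \<and>
     (\<forall>Y. partitive V E Y \<and> X \<inter> Y \<noteq> {} \<longrightarrow> X \<subseteq> Y \<or> Y \<subseteq> X)"

definition Gamma :: "('a \<times> 'a) set \<Rightarrow> (('a \<times> 'a) \<times> ('a \<times> 'a)) set" where
  "Gamma E = {((a, b), (a', b')). (a, b) \<in> E \<and> (a', b') \<in> E \<and>
      ((a = a' \<and> (b, b') \<notin> E) \<or> (b = b' \<and> (a, a') \<notin> E))}"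

text \<open>Implication classes: classes of the transitive closure of Gamma (which is
  reflexive on E, since E is irreflexive).\<close>
definition implication_classes :: "('a \<times> 'a) set \<Rightarrow> ('a \<times> 'a) set set" where
  "implication_classes E = {(Gamma E)\<^sup>+ `` {e} | e. e \<in> E}"

definition color_classes :: "('a \<times> 'a) set \<Rightarrow> ('a \<times> 'a) set set" where
  "color_classes E = {A \<union> A\<inverse> | A. A \<in> implication_classes E}"

definition simplex :: "'a set \<Rightarrow> ('a \<times> 'a) set \<Rightarrow> 'a set \<Rightarrow> ('a \<times> 'a) set \<Rightarrow> nat \<Rightarrow> bool" where
  "simplex V E VS ES r \<longleftrightarrow> r \<ge> 1 \<and> finite VS \<and> card VS = r + 1 \<and> VS \<subseteq> V \<and>
     ES = {(a, b). a \<in> VS \<and> b \<in> VS \<and> a \<noteq> b} \<and> ES \<subseteq> E \<and>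
     (\<forall>a b c d. (a, b) \<in> ES \<and> (c, d) \<in> ES \<and> {a, b} \<noteq> {c, d} \<longrightarrow>
        \<not> (\<exists>C \<in> color_classes E. (a, b) \<in> C \<and> (c, d) \<in> C))"

definition multiplex :: "('a \<times> 'a) set \<Rightarrow> ('a \<times> 'a) set \<Rightarrow> ('a \<times> 'a) set" where
  "multiplex E ES = \<Union> {C \<in> color_classes E. C \<inter> ES \<noteq> {}}"

end

theory Submission
  imports Defs
begin

text \<open>A partitive set X is closed under the forcing relation Gamma: if both ends of an
  edge lie in X, so do both ends of every edge Gamma-related to it; hence a colour class
  meeting E(X) lies inside E(X). Conversely, the vertices covered by an implication class
  form a partitive set. Let the class of the simplex edge uv meet E(X), so u, v \<in> X. If
  another simplex vertex w were outside X, the vertex set Y of the implication class of uw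
  would be a partitive set meeting X but not inside it, so X \<subseteq> Y by strongness. But uv
  and vw lie in classes different from that of uw, which forces v to stay adjacent to both
  ends of every edge of that class, so v \<notin> Y. Thus the simplex lies in X, and every colour
  class of the multiplex meets E(X).\<close>

lemma edges_in_eq: "edges_in E X = E \<inter> X \<times> X"
  unfolding edges_in_def by auto

lemma Gamma_subset: "Gamma E \<subseteq> E \<times> E"
  unfolding Gamma_def by auto

lemma Gamma_rtrancl_edge: "(x, y) \<in> (Gamma E)\<^sup>* \<Longrightarrow> x \<in> E \<Longrightarrow> y \<in> E"
  by (induction rule: rtrancl_induct) (use Gamma_subset in blast)+

lemma Gamma_refl: "irrefl E \<Longrightarrow> x \<in> E \<Longrightarrow> (x, x) \<in> Gamma E"
  unfolding Gamma_def irrefl_def by auto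

lemma sym_Gamma: "sym E \<Longrightarrow> sym (Gamma E)"
  unfolding Gamma_def sym_def by auto

lemma Gamma_rtrancl_sym: "sym E \<Longrightarrow> (x, y) \<in> (Gamma E)\<^sup>* \<Longrightarrow> (y, x) \<in> (Gamma E)\<^sup>*"
  by (metis sym_Gamma sym_rtrancl symD)

lemma Gamma_swap: "sym E \<Longrightarrow> (x, y) \<in> Gamma E \<Longrightarrow> (prod.swap x, prod.swap y) \<in> Gamma E"
  unfolding Gamma_def sym_def by auto

lemma Gamma_rtrancl_swap:
  assumes "sym E" "(x, y) \<in> (Gamma E)\<^sup>*"
  shows "(prod.swap x, prod.swap y) \<in> (Gamma E)\<^sup>*"
  using assms(2)
  by (induction rule: rtrancl_induct) (simp, metis rtrancl_into_rtrancl Gamma_swap[OF assms(1)])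

lemma color_classE:
  assumes "C \<in> color_classes E"
  obtains e where "e \<in> E" and "C = (Gamma E)\<^sup>+ `` {e} \<union> ((Gamma E)\<^sup>+ `` {e})\<inverse>"
  using assms unfolding color_classes_def implication_classes_def by blast

lemma color_class_subset:
  assumes "sym E" "C \<in> color_classes E"
  shows "C \<subseteq> E"
proof -
  obtain e where "C = (Gamma E)\<^sup>+ `` {e} \<union> ((Gamma E)\<^sup>+ `` {e})\<inverse>"
    using color_classE[OF assms(2)] by blast
  moreover have "(Gamma E)\<^sup>+ `` {e} \<subseteq> E"
    using trancl_subset_Sigma[OF Gamma_subset] by blast
  ultimately show ?thesis
    using assms(1) by (blast dest: symD)
qed

lemma color_class_related:
  assumes "sym E" "C \<in> color_classes E" "x \<in> C" "y \<in> C"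
  shows "(x, y) \<in> (Gamma E)\<^sup>* \<or> (x, prod.swap y) \<in> (Gamma E)\<^sup>*"
proof -
  obtain e where C: "C = (Gamma E)\<^sup>+ `` {e} \<union> ((Gamma E)\<^sup>+ `` {e})\<inverse>"
    using color_classE[OF assms(2)] by blast
  have from_e: "(e, z) \<in> (Gamma E)\<^sup>* \<or> (e, prod.swap z) \<in> (Gamma E)\<^sup>*" if "z \<in> C" for z
    using that unfolding C by (cases z) (simp, meson trancl_into_rtrancl)
  have to_e: "(z, e) \<in> (Gamma E)\<^sup>* \<or> (prod.swap z, e) \<in> (Gamma E)\<^sup>*" if "z \<in> C" for z
    using from_e[OF that] Gamma_rtrancl_sym[OF assms(1)] by blast
  consider "(x, e) \<in> (Gamma E)\<^sup>*" | "(prod.swap x, e) \<in> (Gamma E)\<^sup>*"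
    using to_e[OF assms(3)] by blast
  then show ?thesis
  proof cases
    case 1
    then show ?thesis
      using from_e[OF assms(4)] by (meson rtrancl_trans)
  next
    case 2
    then have "(prod.swap x, y) \<in> (Gamma E)\<^sup>* \<or> (prod.swap x, prod.swap y) \<in> (Gamma E)\<^sup>*"
      using from_e[OF assms(4)] by (meson rtrancl_trans)
    then show ?thesis
      using Gamma_rtrancl_swap[OF assms(1), of "prod.swap x"] by (metis swap_swap)
  qed
qed

lemma color_class_containing:
  assumes "irrefl E" "x \<in> E" "(x, y) \<in> (Gamma E)\<^sup>*"
  shows "\<exists>C \<in> color_classes E. x \<in> C \<and> y \<in> C"
proof -
  have "(x, x) \<in> (Gamma E)\<^sup>+" "(x, y) \<in> (Gamma E)\<^sup>+"
    using Gamma_refl[OF assms(1,2)] assms(3) by (auto simp: rtrancl_eq_or_trancl)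
  moreover have "(Gamma E)\<^sup>+ `` {x} \<union> ((Gamma E)\<^sup>+ `` {x})\<inverse> \<in> color_classes E"
    using assms(2) unfolding color_classes_def implication_classes_def by blast
  ultimately show ?thesis by (intro bexI) auto
qed

lemma partitive_Gamma_step:
  assumes "E \<subseteq> V \<times> V" "sym E" "partitive V E X"
    and "(x, y) \<in> Gamma E" "x \<in> X \<times> X"
  shows "y \<in> X \<times> X"
  using assms unfolding Gamma_def partitive_def sym_def by blast

lemma partitive_Gamma_rtrancl:
  assumes "E \<subseteq> V \<times> V" "sym E" "partitive V E X"
    and "(x, y) \<in> (Gamma E)\<^sup>*" "x \<in> X \<times> X"
  shows "y \<in> X \<times> X"
  using assms(4,5) by (induction rule: rtrancl_induct) (use partitive_Gamma_step[OF assms(1-3)] in blast)+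

lemma color_class_subset_edges_in:
  assumes "E \<subseteq> V \<times> V" "sym E" "partitive V E X"
    and "C \<in> color_classes E" "C \<inter> edges_in E X \<noteq> {}"
  shows "C \<subseteq> edges_in E X"
proof
  fix y assume y: "y \<in> C"
  obtain x where x: "x \<in> C" "x \<in> X \<times> X"
    using assms(5) unfolding edges_in_eq by blast
  have "y \<in> X \<times> X \<or> prod.swap y \<in> X \<times> X"
    using color_class_related[OF assms(2,4) x(1) y] partitive_Gamma_rtrancl[OF assms(1-3) _ x(2)]
    by blast
  then have "y \<in> X \<times> X"
    by (cases y) auto
  then show "y \<in> edges_in E X"
    using color_class_subset[OF assms(2,4)] y unfolding edges_in_eq by blast
qed

lemma Gamma_class_outside_neighbour:
  assumes "sym E" "(e, (p, q)) \<in> (Gamma E)\<^sup>*" "(p, q) \<in> E"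
    and "c \<notin> Field ((Gamma E)\<^sup>* `` {e})"
  shows "(p, c) \<in> E \<longleftrightarrow> (q, c) \<in> E"
proof -
  have "((p, q), (p, c)) \<notin> Gamma E" "((p, q), (c, q)) \<notin> Gamma E"
    using assms(2,4) by (auto simp: Field_iff intro: rtrancl_into_rtrancl)
  then show ?thesis
    using assms(1,3) unfolding Gamma_def by (auto dest: symD)
qed

lemma Gamma_class_outside_neighbour_rtrancl:
  assumes "sym E" "(u, w) \<in> E" "((u, w), (p, q)) \<in> (Gamma E)\<^sup>*"
    and "c \<notin> Field ((Gamma E)\<^sup>* `` {(u, w)})"
  shows "((p, c) \<in> E \<longleftrightarrow> (u, c) \<in> E) \<and> ((q, c) \<in> E \<longleftrightarrow> (u, c) \<in> E)"
  using assms(3)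
proof (induction "(p, q)" arbitrary: p q rule: rtrancl_induct)
  case base
  then show ?case
    using Gamma_class_outside_neighbour[OF assms(1) _ assms(2,4)] by simp
next
  case (step y)
  obtain a b where y: "y = (a, b)"
    by fastforce
  have "(p, q) \<in> E"
    using step.hyps(2) Gamma_subset by blast
  then have "(p, c) \<in> E \<longleftrightarrow> (q, c) \<in> E"
    using Gamma_class_outside_neighbour[OF assms(1) _ _ assms(4)] step.hyps by (meson rtrancl_into_rtrancl)
  moreover have "a = p \<or> b = q"
    using step.hyps(2) y unfolding Gamma_def by auto
  ultimately show ?case
    using step.hyps(3) y by blast
qed

lemma partitive_Field_Gamma_class:
  assumes "E \<subseteq> V \<times> V" "sym E" "(u, w) \<in> E"
  shows "partitive V E (Field ((Gamma E)\<^sup>* `` {(u, w)}))"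
    (is "partitive V E ?Y")
proof -
  have "(Gamma E)\<^sup>* `` {(u, w)} \<subseteq> E"
    using Gamma_rtrancl_edge assms(3) by blast
  then have "?Y \<subseteq> V"
    using assms(1) unfolding Field_def by blast
  moreover have "(z, c) \<in> E \<longleftrightarrow> (u, c) \<in> E" if "z \<in> ?Y" "c \<notin> ?Y" for z c
    using that Gamma_class_outside_neighbour_rtrancl[OF assms(2,3) _ that(2)]
    unfolding Field_iff by blast
  ultimately show ?thesis
    using assms(2) unfolding partitive_def by (blast dest: symD)
qed

lemma Gamma_rtrancl_triangle:
  assumes "sym E" "(v, u) \<in> E" "(v, w) \<in> E"
    and not_uv: "((u, w), (u, v)) \<notin> (Gamma E)\<^sup>*" and not_vw: "((u, w), (v, w)) \<notin> (Gamma E)\<^sup>*"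
    and "((u, w), (b, c)) \<in> (Gamma E)\<^sup>*"
  shows "((v, u), (v, b)) \<in> (Gamma E)\<^sup>* \<and> ((v, w), (v, c)) \<in> (Gamma E)\<^sup>*"
  using assms(6)
proof (induction "(b, c)" arbitrary: b c rule: rtrancl_induct)
  case base
  then show ?case by simp
next
  case (step y)
  obtain b' c' where y: "y = (b', c')"
    by fastforce
  have IH: "((v, u), (v, b')) \<in> (Gamma E)\<^sup>*" "((v, w), (v, c')) \<in> (Gamma E)\<^sup>*"
    using step.hyps(3) y by simp_all
  have vb': "(v, b') \<in> E" and vc': "(v, c') \<in> E"
    using Gamma_rtrancl_edge[OF IH(1) assms(2)] Gamma_rtrancl_edge[OF IH(2) assms(3)] .
  have Gamma_step: "((b', c'), (b, c)) \<in> Gamma E" and uw_bc: "((u, w), (b, c)) \<in> (Gamma E)\<^sup>*"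
    using step.hyps y by auto
  have bc: "(b, c) \<in> E"
    using Gamma_step Gamma_subset by blast
  consider "b = b'" "(c', c) \<notin> E" | "c = c'" "(b', b) \<notin> E"
    using Gamma_step unfolding Gamma_def by auto
  then show ?case
  proof cases
    case 1
    have "(v, c) \<in> E"
    proof (rule ccontr)
      assume "(v, c) \<notin> E"
      then have "((b, c), (b, v)) \<in> Gamma E"
        using bc vb' 1 assms(1) unfolding Gamma_def by (auto dest: symD)
      then have "((u, w), (b, v)) \<in> (Gamma E)\<^sup>*"
        by (rule rtrancl_into_rtrancl[OF uw_bc])
      moreover have "((b, v), (u, v)) \<in> (Gamma E)\<^sup>*"
        using Gamma_rtrancl_sym[OF assms(1) Gamma_rtrancl_swap[OF assms(1) IH(1)]] 1 by simp
      ultimately show False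
        using not_uv by (meson rtrancl_trans)
    qed
    then have "((v, c'), (v, c)) \<in> Gamma E"
      using vc' 1 unfolding Gamma_def by auto
    then show ?thesis
      using IH 1 by (meson rtrancl_into_rtrancl)
  next
    case 2
    have "(v, b) \<in> E"
    proof (rule ccontr)
      assume "(v, b) \<notin> E"
      then have "((b, c), (v, c)) \<in> Gamma E"
        using bc vc' 2 assms(1) unfolding Gamma_def by (auto dest: symD)
      then have "((u, w), (v, c)) \<in> (Gamma E)\<^sup>*"
        by (rule rtrancl_into_rtrancl[OF uw_bc])
      moreover have "((v, c), (v, w)) \<in> (Gamma E)\<^sup>*"
        using Gamma_rtrancl_sym[OF assms(1) IH(2)] 2 by simp
      ultimately show False
        using not_vw by (meson rtrancl_trans)
    qed
    then have "((v, b'), (v, b)) \<in> Gamma E"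
      using vb' 2 unfolding Gamma_def by auto
    then show ?thesis
      using IH 2 by (meson rtrancl_into_rtrancl)
  qed
qed

lemma triangle_apex_notin_Field_Gamma_class:
  assumes "sym E" "irrefl E" "(v, u) \<in> E" "(v, w) \<in> E"
    and "((u, w), (u, v)) \<notin> (Gamma E)\<^sup>*" "((u, w), (v, w)) \<notin> (Gamma E)\<^sup>*"
  shows "v \<notin> Field ((Gamma E)\<^sup>* `` {(u, w)})"
proof
  assume "v \<in> Field ((Gamma E)\<^sup>* `` {(u, w)})"
  then have "((v, u), (v, v)) \<in> (Gamma E)\<^sup>* \<or> ((v, w), (v, v)) \<in> (Gamma E)\<^sup>*"
    using Gamma_rtrancl_triangle[OF assms(1,3-6)] unfolding Field_iff by blast
  then have "(v, v) \<in> E"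
    using Gamma_rtrancl_edge assms(3,4) by blast
  then show False
    using assms(2) unfolding irrefl_def by blast
qed

lemma simplex_edges_not_Gamma_related:
  assumes "irrefl E" "simplex V E VS ES r"
    and "(a, b) \<in> ES" "(c, d) \<in> ES" "{a, b} \<noteq> {c, d}"
  shows "((a, b), (c, d)) \<notin> (Gamma E)\<^sup>*"
proof
  assume "((a, b), (c, d)) \<in> (Gamma E)\<^sup>*"
  moreover have "(a, b) \<in> E"
    using assms(2,3) unfolding simplex_def by blast
  ultimately obtain C where "C \<in> color_classes E" "(a, b) \<in> C" "(c, d) \<in> C"
    using color_class_containing[OF assms(1)] by blast
  then show False
    using assms(2-5) unfolding simplex_def by blast
qed

lemma simplex_vertices_subset_strong_partitive:
  assumes "undirected_graph V E" "strong_partitive V E X" "simplex V E VS ES r"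
    and "(u, v) \<in> ES" "u \<in> X" "v \<in> X"
  shows "VS \<subseteq> X"
proof
  have EV: "E \<subseteq> V \<times> V" and irr: "irrefl E" and sy: "sym E"
    using assms(1) unfolding undirected_graph_def is_graph_def by auto
  have ES: "ES = {(a, b). a \<in> VS \<and> b \<in> VS \<and> a \<noteq> b}" "ES \<subseteq> E"
    using assms(3) unfolding simplex_def by auto
  fix w assume w: "w \<in> VS"
  show "w \<in> X"
  proof (rule ccontr)
    assume "w \<notin> X"
    let ?Y = "Field ((Gamma E)\<^sup>* `` {(u, w)})"
    have edges: "(u, w) \<in> ES" "(v, u) \<in> ES" "(v, w) \<in> ES"
      using ES(1) assms(4-6) w \<open>w \<notin> X\<close> by auto
    have "partitive V E ?Y"
      using partitive_Field_Gamma_class[OF EV sy] edges(1) ES(2) by blast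
    moreover have "u \<in> ?Y" "w \<in> ?Y"
      by (auto simp: Field_iff)
    ultimately have "X \<subseteq> ?Y"
      using assms(2,5) \<open>w \<notin> X\<close> unfolding strong_partitive_def by blast
    moreover have "v \<notin> ?Y"
    proof (rule triangle_apex_notin_Field_Gamma_class[OF sy irr])
      show "(v, u) \<in> E" "(v, w) \<in> E"
        using edges ES(2) by blast+
      show "((u, w), (u, v)) \<notin> (Gamma E)\<^sup>*" "((u, w), (v, w)) \<notin> (Gamma E)\<^sup>*"
        using simplex_edges_not_Gamma_related[OF irr assms(3)] edges ES(1)
        by (auto simp: doubleton_eq_iff)
    qed
    ultimately show False
      using assms(6) by blast
  qed
qed

theorem theorem3p7:
  fixes V :: "'a set" and E :: "('a \<times> 'a) set" and X VS :: "'a set"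
    and ES :: "('a \<times> 'a) set" and r :: nat
  assumes "undirected_graph V E"
    and "strong_partitive V E X"
    and "simplex V E VS ES r"
    and "multiplex E ES \<inter> edges_in E X \<noteq> {}"
  shows "multiplex E ES \<subseteq> edges_in E X"
proof -
  have EV: "E \<subseteq> V \<times> V" and sy: "sym E"
    using assms(1) unfolding undirected_graph_def is_graph_def by auto
  have X: "partitive V E X"
    using assms(2) unfolding strong_partitive_def by blast
  have ES: "ES = {(a, b). a \<in> VS \<and> b \<in> VS \<and> a \<noteq> b}" "ES \<subseteq> E"
    using assms(3) unfolding simplex_def by auto
  obtain C where C: "C \<in> color_classes E" "C \<inter> ES \<noteq> {}" "C \<inter> edges_in E X \<noteq> {}"
    using assms(4) unfolding multiplex_def by blast
  obtain u v where "(u, v) \<in> ES" "(u, v) \<in> edges_in E X"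
    using C(2) color_class_subset_edges_in[OF EV sy X C(1,3)] by auto
  then have "VS \<subseteq> X"
    using simplex_vertices_subset_strong_partitive[OF assms(1-3)] unfolding edges_in_def by blast
  then have "ES \<subseteq> edges_in E X"
    using ES unfolding edges_in_def by blast
  then show ?thesis
    unfolding multiplex_def using color_class_subset_edges_in[OF EV sy X] by blast
qed

end
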